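(* If $\mathbf{h}$ has a fixed point, the modified Jacobi-type iteration corresponding to $\mathbf{x}^{n+1} = \mathbf{h}(\mathbf{x}^n)$ converges in at most $m/b^2$ iterations from any initial guess $\mathbf{x}^0$. ($m$ is the number of nonzero entries in all blocks in the sparsity pattern $S_B$ and $b$ is the block size.)
   Context: Let $\mathbf{A}\in\mathbb{R}^{n\times n}$ be partitioned into square $b\times b$ blocks, and $S_B$ a set of block indices containing all diagonal blocks. The unknowns (entries of the block ILU factors $\mathbf{L}_{ij}$, $i>j$, and $\mathbf{U}_{ij}$, $i\le j$, for $(i,j)\in S_B$) form $\mathbf{x}\in\mathbb{R}^m$, $m=|S_B|b^2$, with $\mathbf{X}_{ij}$ the $b\times b$ block for index $(i,j)$. The map $\mathbf{h}:D_B\to\mathbb{R}^m$ is given blockwise by $\mathbf{H}_{ij}(\mathbf{x})=(\mathbf{A}_{ij}-\sum_{k=1}^{j-1}\mathbf{X}_{ik}\mathbf{X}_{kj})\mathbf{X}_{jj}^{-1}$ for $i>j$ and $\mathbf{H}_{ij}(\mathbf{x})=\mathbf{A}_{ij}-\sum_{k=1}^{i-1}\mathbf{X}_{ik}\mathbf{X}_{kj}$ for $i\le j$, on $D_B:=\{\mathbf{x}: \mathbf{X}_{jj}\text{ nonsingular for all diagonal blocks}\}$. The modified Jacobi-type iteration is the synchronous iteration $\mathbf{x}^{n+1}=\mathbf{h}(\mathbf{x}^n)$ except that whenever a diagonal block $\mathbf{X}_{jj}$ becomes singular, it is replaced by an arbitrary nonsingular matrix. *)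

theory Defs
  imports "HOL-Analysis.Analysis"
begin

text \<open>Block indices are pairs (i,j) with 1 \<le> i,j \<le> N (N = number of block rows).
  A block-ILU unknown vector is a map from block indices to b\<times>b blocks; only its
  values on the pattern S are meaningful.\<close>

type_synonym ('b) blk = "real ^ 'b ^ 'b"

definition blk_at :: "(nat \<times> nat) set \<Rightarrow> (nat \<times> nat \<Rightarrow> 'b::finite blk) \<Rightarrow> nat \<Rightarrow> nat \<Rightarrow> 'b blk" where
  "blk_at S x i j = (if (i, j) \<in> S then x (i, j) else 0)"

definition h_map :: "(nat \<times> nat) set \<Rightarrow> (nat \<Rightarrow> nat \<Rightarrow> 'b::finite blk)
    \<Rightarrow> (nat \<times> nat \<Rightarrow> 'b blk) \<Rightarrow> (nat \<times> nat \<Rightarrow> 'b blk)" where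
  "h_map S A x = (\<lambda>(i, j).
     if j < i then (A i j - (\<Sum>k\<in>{1..<j}. blk_at S x i k ** blk_at S x k j)) ** matrix_inv (x (j, j))
     else A i j - (\<Sum>k\<in>{1..<i}. blk_at S x i k ** blk_at S x k j))"

definition in_DB :: "nat \<Rightarrow> (nat \<times> nat \<Rightarrow> 'b::finite blk) \<Rightarrow> bool" where
  "in_DB N x \<longleftrightarrow> (\<forall>j\<in>{1..N}. invertible (x (j, j)))"

definition diag_repair :: "(nat \<times> nat) set \<Rightarrow> (nat \<times> nat \<Rightarrow> 'b::finite blk) \<Rightarrow> (nat \<times> nat \<Rightarrow> 'b blk) \<Rightarrow> bool" where
  "diag_repair S y z \<longleftrightarrow>
     (\<forall>(i, j)\<in>S. (i \<noteq> j \<longrightarrow> z (i, j) = y (i, j)) \<and>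
        (i = j \<longrightarrow> (if invertible (y (i, i)) then z (i, i) = y (i, i) else invertible (z (i, i)))))"

definition modified_jacobi ::
  "(nat \<times> nat) set \<Rightarrow> (nat \<Rightarrow> nat \<Rightarrow> 'b::finite blk) \<Rightarrow> (nat \<times> nat \<Rightarrow> 'b blk) \<Rightarrow> (nat \<Rightarrow> nat \<times> nat \<Rightarrow> 'b blk) \<Rightarrow> bool" where
  "modified_jacobi S A x0 x \<longleftrightarrow>
     diag_repair S x0 (x 0) \<and> (\<forall>n. diag_repair S (h_map S A (x n)) (x (Suc n)))"

end

theory Submission
  imports Defs
begin

text \<open>Order the block entries by the stage of block Gaussian elimination at which they are
  computed: row i of U at stage 2i, column j of L at stage 2j+1.  Each block of h then depends
  only on blocks of strictly earlier stages, so h is "strictly triangular".  Hence once all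
  blocks of earlier stage equal those of the fixed point, one more step makes block (i,j)
  correct as well; a correct diagonal block is nonsingular, so the repair never changes it.
  Inducting on the rank of an entry among the |S| = m/b^2 blocks, all of them are correct after
  |S| steps.\<close>

definition ilu_stage :: "nat \<times> nat \<Rightarrow> nat" where
  "ilu_stage p = (if snd p < fst p then 2 * snd p + 1 else 2 * fst p)"

lemma finite_convergence_of_triangular_iteration:
  fixes \<mu> :: "'i \<Rightarrow> 'o::preorder" and x :: "nat \<Rightarrow> 'i \<Rightarrow> 'v"
  assumes "finite S"
    and step: "\<And>n p. p \<in> S \<Longrightarrow> \<forall>q\<in>S. \<mu> q < \<mu> p \<longrightarrow> x n q = xs q \<Longrightarrow> x (Suc n) p = xs p"
  shows "\<forall>n \<ge> card S. \<forall>p\<in>S. x n p = xs p"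
proof -
  define rank where "rank p = card {q\<in>S. \<mu> q < \<mu> p}" for p
  have rank_less: "rank q < rank p" if "q \<in> S" "\<mu> q < \<mu> p" for p q
  proof -
    have "{r\<in>S. \<mu> r < \<mu> q} \<subset> {r\<in>S. \<mu> r < \<mu> p}"
      using that less_trans by auto
    then show ?thesis
      unfolding rank_def by (intro psubset_card_mono) (use \<open>finite S\<close> in auto)
  qed
  have rank_bound: "rank p < card S" if "p \<in> S" for p
  proof -
    have "{r\<in>S. \<mu> r < \<mu> p} \<subset> S" using that by auto
    then show ?thesis
      unfolding rank_def by (intro psubset_card_mono) (use \<open>finite S\<close> in auto)
  qed
  have "\<forall>p\<in>S. rank p < n \<longrightarrow> x n p = xs p" for n
  proof (induction n)
    case 0
    show ?case by simp
  next
    case (Suc n)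
    show ?case
    proof (intro ballI impI)
      fix p
      assume "p \<in> S" and "rank p < Suc n"
      have "x n q = xs q" if "q \<in> S" and "\<mu> q < \<mu> p" for q
      proof -
        have "rank q < n"
          using rank_less[OF that] \<open>rank p < Suc n\<close> by linarith
        with Suc.IH \<open>q \<in> S\<close> show ?thesis
          by blast
      qed
      with \<open>p \<in> S\<close> show "x (Suc n) p = xs p"
        by (blast intro: step)
    qed
  qed
  then show ?thesis
    using rank_bound by (metis order_less_le_trans)
qed

lemma h_map_depends_on_earlier_stages:
  assumes agree: "\<forall>q\<in>S. ilu_stage q < ilu_stage (i, j) \<longrightarrow> y q = z q"
    and diag: "(j, j) \<in> S"
  shows "h_map S A y (i, j) = h_map S A z (i, j)"
proof -
  have blk: "blk_at S y a c = blk_at S z a c" if "ilu_stage (a, c) < ilu_stage (i, j)" for a c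
    using agree that by (auto simp: blk_at_def)
  have sum_eq: "(\<Sum>k\<in>{1..<l}. blk_at S y i k ** blk_at S y k j)
      = (\<Sum>k\<in>{1..<l}. blk_at S z i k ** blk_at S z k j)"
    if "l = min i j" for l
    using that by (intro sum.cong refl arg_cong2[where f = "(**)"] blk) (auto simp: ilu_stage_def)
  show ?thesis
  proof (cases "j < i")
    case True
    have "y (j, j) = z (j, j)"
      using agree diag True by (auto simp: ilu_stage_def)
    with True sum_eq[of j] show ?thesis
      by (simp add: h_map_def)
  next
    case False
    with sum_eq[of i] show ?thesis
      by (simp add: h_map_def)
  qed
qed

lemma diag_repair_keeps_nonsingular:
  assumes "diag_repair S y z" and "(i, j) \<in> S" and "i = j \<Longrightarrow> invertible (y (i, i))"
  shows "z (i, j) = y (i, j)"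
proof -
  have "(i \<noteq> j \<longrightarrow> z (i, j) = y (i, j)) \<and>
      (i = j \<longrightarrow> (if invertible (y (i, i)) then z (i, i) = y (i, i) else invertible (z (i, i))))"
    using assms(1,2) unfolding diag_repair_def by fast
  with assms(3) show ?thesis
    by (cases "i = j") simp_all
qed

theorem theorem8:
  fixes N :: nat
    and S :: "(nat \<times> nat) set"
    and A :: "nat \<Rightarrow> nat \<Rightarrow> real ^ 'b::finite ^ 'b"
    and x0 xs :: "nat \<times> nat \<Rightarrow> real ^ 'b ^ 'b"
    and x :: "nat \<Rightarrow> nat \<times> nat \<Rightarrow> real ^ 'b ^ 'b"
  assumes S_sub: "S \<subseteq> {1..N} \<times> {1..N}"
    and S_diag: "\<forall>j\<in>{1..N}. (j, j) \<in> S"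
    and fp_dom: "in_DB N xs"
    and fp: "\<forall>p\<in>S. h_map S A xs p = xs p"
    and iter: "modified_jacobi S A x0 x"
  shows "\<forall>n \<ge> card S. \<forall>p\<in>S. x n p = xs p"
proof (rule finite_convergence_of_triangular_iteration[where \<mu> = ilu_stage])
  show "finite S"
    using S_sub finite_subset by blast
next
  fix n p
  assume "p \<in> S" and earlier: "\<forall>q\<in>S. ilu_stage q < ilu_stage p \<longrightarrow> x n q = xs q"
  obtain i j where p: "p = (i, j)"
    by (cases p)
  have j: "j \<in> {1..N}"
    using S_sub \<open>p \<in> S\<close> p by blast
  have "h_map S A (x n) (i, j) = h_map S A xs (i, j)"
    using earlier p S_diag j by (intro h_map_depends_on_earlier_stages) simp_all
  also have "\<dots> = xs (i, j)"
    using fp \<open>p \<in> S\<close> p by blast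
  finally have h_correct: "h_map S A (x n) (i, j) = xs (i, j)" .
  have "diag_repair S (h_map S A (x n)) (x (Suc n))"
    using iter by (simp add: modified_jacobi_def)
  moreover have "invertible (xs (j, j))"
    using fp_dom j by (simp add: in_DB_def)
  ultimately have "x (Suc n) (i, j) = h_map S A (x n) (i, j)"
    using \<open>p \<in> S\<close> p h_correct by (intro diag_repair_keeps_nonsingular) simp_all
  with h_correct p show "x (Suc n) p = xs p"
    by simp
qed

end
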